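(* If $n$ is odd, then $\xi=H_1+H_2+\dots+H_{n-1}$ is the unique $\{1,\dots,n-1\}$-canonical element of $\mathrm{SU}(n)$.
   Context: For $\mathrm{SU}(n)$: $E_i$ is the $n\times n$ diagonal matrix with $(i,i)$ entry $\sqrt{-1}$, others $0$; $\mathfrak t=\{\sum a_iE_i:a_i\in\mathbb R,\sum a_i=0\}$; $H_i=\frac{n-i}{n}(E_1+\dots+E_i)-\frac{i}{n}(E_{i+1}+\dots+E_n)$, $i=1,\dots,n-1$. $\mathfrak I(\mathrm{SU}(n))=\{\sum a_iE_i\in\mathfrak t: a_i\in\mathbb Z\}$. $\mathfrak I'(\mathrm{SU}(n))$ is the set of elements of $\mathfrak I(\mathrm{SU}(n))$ of the form $\sum n_iH_i$ with all $n_i\ge0$. Partial order: $\sum n_iH_i\preceq\sum n_i'H_i$ iff $n_i'\le n_i$ for all $i$. For $I\subseteq\{1,\dots,n-1\}$, $\mathfrak C_I=\{\sum n_iH_i:n_i\ge0,\ n_j>0\iff j\in I\}$; an $I$-canonical element is a maximal element of $(\mathfrak I'(\mathrm{SU}(n))\cap\mathfrak C_I,\preceq)$. *)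

theory Defs
  imports Main "HOL.Real"
begin

text \<open>Elements of the Cartan subalgebra t of SU(n) are represented by their
coordinate vectors a = (a_1,...,a_n) w.r.t. E_1,...,E_n, as functions
nat => real, supported on {1..n} (value 0 outside).\<close>

definition Hvec :: "nat \<Rightarrow> nat \<Rightarrow> nat \<Rightarrow> real" where
  "Hvec n i k = (if k \<in> {1..n} then
                   (if k \<le> i then real (n - i) / real n else - real i / real n)
                 else 0)"

definition Hcomb :: "nat \<Rightarrow> (nat \<Rightarrow> real) \<Rightarrow> nat \<Rightarrow> real" where
  "Hcomb n c = (\<lambda>k. \<Sum>i\<in>{1..n-1}. c i * Hvec n i k)"

definition cartan_t :: "nat \<Rightarrow> (nat \<Rightarrow> real) set" where
  "cartan_t n = {x. (\<forall>k. k \<notin> {1..n} \<longrightarrow> x k = 0) \<and> (\<Sum>k\<in>{1..n}. x k) = 0}"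

definition lattice_I :: "nat \<Rightarrow> (nat \<Rightarrow> real) set" where
  "lattice_I n = {x \<in> cartan_t n. \<forall>k\<in>{1..n}. x k \<in> \<int>}"

definition lattice_I' :: "nat \<Rightarrow> (nat \<Rightarrow> real) set" where
  "lattice_I' n = {x \<in> lattice_I n. \<exists>c. (\<forall>i\<in>{1..n-1}. c i \<ge> 0) \<and> x = Hcomb n c}"

definition Hle :: "nat \<Rightarrow> (nat \<Rightarrow> real) \<Rightarrow> (nat \<Rightarrow> real) \<Rightarrow> bool" where
  "Hle n x y = (\<exists>c c'. x = Hcomb n c \<and> y = Hcomb n c' \<and> (\<forall>i\<in>{1..n-1}. c' i \<le> c i))"

definition cone_C :: "nat \<Rightarrow> nat set \<Rightarrow> (nat \<Rightarrow> real) set" where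
  "cone_C n I = {x. \<exists>c. x = Hcomb n c \<and> (\<forall>i\<in>{1..n-1}. c i \<ge> 0) \<and>
                          (\<forall>j\<in>{1..n-1}. c j > 0 \<longleftrightarrow> j \<in> I)}"

definition canonical :: "nat \<Rightarrow> nat set \<Rightarrow> (nat \<Rightarrow> real) \<Rightarrow> bool" where
  "canonical n I x = (x \<in> lattice_I' n \<inter> cone_C n I \<and>
     (\<forall>y \<in> lattice_I' n \<inter> cone_C n I. Hle n x y \<longrightarrow> y = x))"

end

theory Submission
  imports Defs
begin

text \<open>The coefficient of \<open>H\<^sub>k\<close> is the drop between consecutive coordinates
  \<open>k\<close> and \<open>k+1\<close>, so an element of \<open>I' \<inter> C\<^bsub>{1..n-1}\<^esub>\<close> has positive integer, hence
  \<open>\<ge> 1\<close>, coefficients: it lies below \<open>\<xi>\<close>, which makes \<open>\<xi>\<close> the greatest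
  element as soon as it belongs to the lattice. Telescoping gives the coordinates
  \<open>\<xi>\<^sub>k = (n - k) - (n - 1)/2\<close>, which are integers exactly when \<open>n\<close> is odd.\<close>

lemma Hvec_consecutive_diff:
  assumes "1 \<le> k" "k < n"
  shows "Hvec n i k - Hvec n i (Suc k) = (if i = k then 1 else 0)"
  using assms by (auto simp: Hvec_def of_nat_diff field_simps)

lemma Hcomb_consecutive_diff:
  assumes "1 \<le> k" "k < n"
  shows "Hcomb n c k - Hcomb n c (Suc k) = c k"
proof -
  have "Hcomb n c k - Hcomb n c (Suc k) = (\<Sum>i\<in>{1..n-1}. c i * (Hvec n i k - Hvec n i (Suc k)))"
    by (simp add: Hcomb_def sum_subtractf right_diff_distrib)
  also have "\<dots> = (\<Sum>i\<in>{1..n-1}. if i = k then c i else 0)"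
    using assms by (intro sum.cong) (auto simp: Hvec_consecutive_diff)
  also have "\<dots> = c k"
    using assms by (simp add: sum.delta, linarith)
  finally show ?thesis .
qed

lemma Hcomb_coeff_unique:
  assumes "Hcomb n c = Hcomb n c'" "i \<in> {1..n-1}"
  shows "c i = c' i"
  using assms Hcomb_consecutive_diff[of i n c] Hcomb_consecutive_diff[of i n c'] by auto

lemma Hcomb_cong:
  assumes "\<forall>i\<in>{1..n-1}. c i = c' i"
  shows "Hcomb n c = Hcomb n c'"
  using assms unfolding Hcomb_def by (auto intro!: sum.cong)

lemma Hle_antisym:
  assumes "Hle n x y" "Hle n y x"
  shows "x = y"
proof -
  obtain c c' where x: "x = Hcomb n c" and y: "y = Hcomb n c'"
    and "\<forall>i\<in>{1..n-1}. c' i \<le> c i"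
    using assms(1) unfolding Hle_def by auto
  moreover obtain d d' where "y = Hcomb n d" "x = Hcomb n d'" "\<forall>i\<in>{1..n-1}. d' i \<le> d i"
    using assms(2) unfolding Hle_def by auto
  ultimately have "\<forall>i\<in>{1..n-1}. c i = c' i"
    using Hcomb_coeff_unique[of n c d'] Hcomb_coeff_unique[of n c' d] by force
  then show ?thesis
    unfolding x y by (rule Hcomb_cong)
qed

lemma Hcomb_coeff_Ints:
  assumes "Hcomb n c \<in> lattice_I n" "i \<in> {1..n-1}"
  shows "c i \<in> \<int>"
proof -
  have i: "1 \<le> i" "i < n" using assms(2) by auto
  then have "Hcomb n c i \<in> \<int>" "Hcomb n c (Suc i) \<in> \<int>"
    using assms(1) unfolding lattice_I_def by auto
  then have "Hcomb n c i - Hcomb n c (Suc i) \<in> \<int>" by simp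
  then show ?thesis using Hcomb_consecutive_diff[OF i] by simp
qed

lemma Hle_Hcomb_ones:
  assumes "x \<in> lattice_I' n \<inter> cone_C n {1..n-1}"
  shows "Hle n x (Hcomb n (\<lambda>i. 1))"
proof -
  obtain c where c: "x = Hcomb n c" "\<forall>j\<in>{1..n-1}. c j > 0"
    using assms unfolding cone_C_def by auto
  have "x \<in> lattice_I n"
    using assms unfolding lattice_I'_def by auto
  then have "\<forall>j\<in>{1..n-1}. c j \<in> \<int>"
    using c(1) Hcomb_coeff_Ints by blast
  with c(2) have "\<forall>j\<in>{1..n-1}. 1 \<le> c j"
    using Ints_nonzero_abs_ge1 by fastforce
  with c(1) show ?thesis unfolding Hle_def by auto
qed

lemma sum_Hvec_eq_0:
  assumes "i \<in> {1..n-1}"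
  shows "(\<Sum>k\<in>{1..n}. Hvec n i k) = 0"
proof -
  have i: "1 \<le> i" "i < n" using assms by auto
  have split: "{1..n} = {1..i} \<union> {Suc i..n}" using i by auto
  have "(\<Sum>k\<in>{1..n}. Hvec n i k) = (\<Sum>k\<in>{1..i}. Hvec n i k) + (\<Sum>k\<in>{Suc i..n}. Hvec n i k)"
    unfolding split by (rule sum.union_disjoint) auto
  also have "\<dots> = (\<Sum>k\<in>{1..i}. real (n - i) / real n) + (\<Sum>k\<in>{Suc i..n}. - real i / real n)"
    using i by (intro arg_cong2[where f = "(+)"] sum.cong) (auto simp: Hvec_def)
  finally show ?thesis using i by (simp add: of_nat_diff field_simps)
qed

lemma Hcomb_in_cartan_t: "Hcomb n c \<in> cartan_t n"
proof -
  have "(\<Sum>k\<in>{1..n}. Hcomb n c k) = (\<Sum>i\<in>{1..n-1}. c i * (\<Sum>k\<in>{1..n}. Hvec n i k))"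
    unfolding Hcomb_def sum_distrib_left by (rule sum.swap)
  also have "\<dots> = 0"
    by (rule sum.neutral) (use sum_Hvec_eq_0 in auto)
  moreover have "\<forall>k. k \<notin> {1..n} \<longrightarrow> Hcomb n c k = 0"
    unfolding Hcomb_def Hvec_def by (intro allI impI sum.neutral) auto
  ultimately show ?thesis unfolding cartan_t_def by simp
qed

lemma Hcomb_telescope:
  assumes "1 \<le> k" "k \<le> n"
  shows "Hcomb n c k = Hcomb n c n + (\<Sum>i\<in>{k..<n}. c i)"
  using assms(2,1)
proof (induction k rule: inc_induct)
  case (step k)
  then show ?case
    using Hcomb_consecutive_diff[of k n c] by (simp add: sum.atLeast_Suc_lessThan)
qed simp

lemma Hcomb_ones_last:
  assumes "n = 2 * m + 1"
  shows "Hcomb n (\<lambda>i. 1) n = - real m"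
proof -
  have "Hcomb n (\<lambda>i. 1) n = - (\<Sum>i\<in>{1..n-1}. real i) / real n"
    unfolding Hcomb_def using assms
    by (simp add: Hvec_def sum_negf sum_divide_distrib)
  moreover have "2 * (\<Sum>i\<in>{1..n-1}. real i) = real (n-1) * (real (n-1) + 1)"
    using double_gauss_sum_from_Suc_0[of "n-1", where ?'a = real] by simp
  then have "(\<Sum>i\<in>{1..n-1}. real i) = real m * real n"
    using assms by (simp add: field_simps)
  ultimately show ?thesis using assms by simp
qed

lemma Hcomb_ones_in_lattice_I':
  assumes "odd n"
  shows "Hcomb n (\<lambda>i. 1) \<in> lattice_I' n \<inter> cone_C n {1..n-1}"
proof -
  obtain m where m: "n = 2 * m + 1" using assms oddE by blast
  have "Hcomb n (\<lambda>i. 1) k = real (n - k) - real m" if "k \<in> {1..n}" for k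
    using that Hcomb_telescope[of k n "\<lambda>i. 1"] Hcomb_ones_last[OF m] by simp
  then have "\<forall>k\<in>{1..n}. Hcomb n (\<lambda>i. 1) k \<in> \<int>" by simp
  then show ?thesis
    using Hcomb_in_cartan_t[of n "\<lambda>i. 1"]
    unfolding lattice_I'_def lattice_I_def cone_C_def by (auto intro!: exI[of _ "\<lambda>i. 1"])
qed

theorem mainTheorem11:
  fixes n :: nat and x :: "nat \<Rightarrow> real"
  assumes "odd n"
  shows "canonical n {1..n-1} x \<longleftrightarrow> x = Hcomb n (\<lambda>i. 1)"
proof
  assume "canonical n {1..n-1} x"
  then show "x = Hcomb n (\<lambda>i. 1)"
    using Hle_Hcomb_ones Hcomb_ones_in_lattice_I'[OF assms] unfolding canonical_def by auto
next
  assume "x = Hcomb n (\<lambda>i. 1)"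
  then show "canonical n {1..n-1} x"
    using Hcomb_ones_in_lattice_I'[OF assms] Hle_Hcomb_ones Hle_antisym
    unfolding canonical_def by blast
qed

end
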